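(* Let $A$ be the random matrix defined in the context, with parameters $r\le k$ and $D$ satisfying $r\to\infty$, $D/r^2\to\infty$ and $(\log k)/D\to 0$. Then there is an absolute constant $c$ such that with probability $1-o(1)$ over $A$: (i) $\lambda_\delta(A)\le 1$ for $\delta=c\sqrt{(\log k)/D}$; and (ii) for every algorithm $\mathcal{A}$ that receives a document of $m=o(r^2)$ words generated from an unknown $x^*\in\mathcal{S}_k$ and outputs a subset of $[k]$, there exists $x^*\in\mathcal{S}_k$ with at most $r$ nonzero entries, all of them at least $1/r$, such that $\mathcal A$ outputs $\mathrm{supp}(x^* )$ with probability less than $3/4$ (for all sufficiently large parameters).
   Context: Random instance: let $S_1,\dots,S_k\subseteq[D]$ be independent uniformly random subsets of $[D]$ (each element included independently with probability $1/2$), and let $A\in\mathbb{R}^{D\times k}$ have $A_{ij}=1/|S_j|$ if $i\in S_j$ and $A_{ij}=0$ otherwise. $\mathcal{S}_k=\{z\in\mathbb{R}^k_{\ge0}:\sum_iz_i=1\}$. A document of $m$ words generated from $x\in\mathcal{S}_k$ consists of $m$ words drawn i.i.d. from the categorical distribution on $[D]$ with probabilities $Ax$. For a matrix $M$, $\|M\|_{\max}=\max_{i,j}|M_{ij}|$; $\lambda_\delta(A)$ is the optimal value of: minimize $\|B\|_{\max}$ over $B\in\mathbb{R}^{k\times D}$ subject to $\|BA-I_k\|_{\max}\le\delta$. *)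

theory Defs
  imports "HOL-Probability.Probability_Mass_Function" "HOL-Library.Extended_Real"
begin

text \<open>Conventions: [D] = {0..<D} (words), [k] = {0..<k} (topics).
  Matrices are functions nat => nat => real, only entries inside the index ranges matter.\<close>

definition topic_matrix :: "(nat \<Rightarrow> nat set) \<Rightarrow> nat \<Rightarrow> nat \<Rightarrow> real" where
  "topic_matrix S i j = (if i \<in> S j then 1 / real (card (S j)) else 0)"

definition max_norm :: "nat \<Rightarrow> nat \<Rightarrow> (nat \<Rightarrow> nat \<Rightarrow> real) \<Rightarrow> real" where
  "max_norm p q M = Max {\<bar>M i j\<bar> | i j. i < p \<and> j < q}"

definition mat_mult :: "nat \<Rightarrow> (nat \<Rightarrow> nat \<Rightarrow> real) \<Rightarrow> (nat \<Rightarrow> nat \<Rightarrow> real) \<Rightarrow> nat \<Rightarrow> nat \<Rightarrow> real" where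
  "mat_mult D B A i j = (\<Sum>l<D. B i l * A l j)"

definition id_mat :: "nat \<Rightarrow> nat \<Rightarrow> real" where
  "id_mat i j = (if i = j then 1 else 0)"

text \<open>lambda_delta(A): optimal value (in extended reals, +infinity if infeasible) of
  min ||B||_max s.t. ||BA - I_k||_max <= delta.\<close>
definition lambda_delta :: "nat \<Rightarrow> nat \<Rightarrow> real \<Rightarrow> (nat \<Rightarrow> nat \<Rightarrow> real) \<Rightarrow> ereal" where
  "lambda_delta k D \<delta> A = Inf {ereal (max_norm k D B) | B.
      max_norm k k (\<lambda>i j. mat_mult D B A i j - id_mat i j) \<le> \<delta>}"

definition prob_simplex :: "nat \<Rightarrow> (nat \<Rightarrow> real) set" where
  "prob_simplex k = {x. (\<forall>i<k. x i \<ge> 0) \<and> (\<forall>i\<ge>k. x i = 0) \<and> (\<Sum>i<k. x i) = 1}"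

definition supp :: "nat \<Rightarrow> (nat \<Rightarrow> real) \<Rightarrow> nat set" where
  "supp k x = {i. i < k \<and> x i \<noteq> 0}"

definition word_prob :: "nat \<Rightarrow> (nat \<Rightarrow> nat \<Rightarrow> real) \<Rightarrow> (nat \<Rightarrow> real) \<Rightarrow> nat \<Rightarrow> real" where
  "word_prob k A x l = (\<Sum>j<k. A l j * x j)"

definition documents :: "nat \<Rightarrow> nat \<Rightarrow> nat list set" where
  "documents D m = {w. length w = m \<and> set w \<subseteq> {..<D}}"

definition output_prob :: "nat \<Rightarrow> nat \<Rightarrow> nat \<Rightarrow> (nat \<Rightarrow> nat \<Rightarrow> real) \<Rightarrow>
    (nat list \<Rightarrow> nat set pmf) \<Rightarrow> (nat \<Rightarrow> real) \<Rightarrow> nat set \<Rightarrow> real" where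
  "output_prob k D m A alg x T =
     (\<Sum>w\<in>documents D m. (\<Prod>t<m. word_prob k A x (w ! t)) * pmf (alg w) T)"

definition subsets_prob :: "nat \<Rightarrow> nat \<Rightarrow> ((nat \<Rightarrow> nat set) \<Rightarrow> bool) \<Rightarrow> real" where
  "subsets_prob k D E =
     real (card {S \<in> PiE {..<k} (\<lambda>_. Pow {..<D}). E S})
       / real (card (PiE {..<k} (\<lambda>_. Pow {..<D})))"

end

theory Submission
  imports Defs "HOL-Probability.Probability"
begin

text \<open>
  (i) Let \<open>B\<^sub>i\<^sub>l = 1\<close> if \<open>l \<in> S\<^sub>i\<close> and \<open>-1\<close> otherwise. Then \<open>\<parallel>B\<parallel>\<^sub>m\<^sub>a\<^sub>x = 1\<close> and
  \<open>(B A - I)\<^sub>i\<^sub>j = (2 |S\<^sub>i \<inter> S\<^sub>j| - |S\<^sub>j|) / |S\<^sub>j|\<close> for \<open>i \<noteq> j\<close>; by Hoeffding's inequality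
  and a union bound over the \<open>k\<^sup>2\<close> pairs all these entries are \<open>O(\<surd>(log k / D))\<close>.

  (ii) Let \<open>x\<^sub>0\<close>, \<open>x\<^sub>1\<close> be the uniform mixtures of the first \<open>r\<close> and the first \<open>r - 1\<close>
  topics, whose supports differ. For a typical \<open>A\<close> the word distributions \<open>A x\<^sub>0\<close> and
  \<open>A x\<^sub>1\<close> are at \<open>\<chi>\<^sup>2\<close>-distance \<open>O(1/r\<^sup>2)\<close>, hence the two document distributions are
  at \<open>\<chi>\<^sup>2\<close>-distance \<open>(1 + O(1/r\<^sup>2))\<^sup>m - 1 = o(1)\<close> when \<open>m = o(r\<^sup>2)\<close>. By Le Cam's
  two-point argument no algorithm can output the support of both with probability \<open>3/4\<close>.
\<close>

section \<open>\<open>\<chi>\<^sup>2\<close>-divergence and the two-point method\<close>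

lemma documents_Suc:
  "documents D (Suc m) = (\<lambda>(l, w). l # w) ` ({..<D} \<times> documents D m)"
  unfolding documents_def
  by (rule set_eqI, case_tac x) auto

lemma documents_0: "documents D 0 = {[]}"
  by (auto simp: documents_def)

lemma nth_document_less:
  assumes "w \<in> documents D m" "t < m"
  shows "w ! t < D"
  using assms nth_mem[of t w] by (auto simp: documents_def subset_iff)

lemma sum_documents_prod:
  fixes f :: "nat \<Rightarrow> real"
  shows "(\<Sum>w\<in>documents D m. \<Prod>t<m. f (w ! t)) = (\<Sum>l<D. f l) ^ m"
proof (induction m)
  case 0
  show ?case by (simp add: documents_0)
next
  case (Suc m)
  have inj: "inj_on (\<lambda>(l, w). l # w) ({..<D} \<times> documents D m)"
    by (auto simp: inj_on_def)
  have "(\<Sum>w\<in>documents D (Suc m). \<Prod>t<Suc m. f (w ! t))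
      = (\<Sum>(l, w)\<in>{..<D} \<times> documents D m. f l * (\<Prod>t<m. f (w ! t)))"
    unfolding documents_Suc sum.reindex[OF inj]
    by (simp add: case_prod_unfold prod.lessThan_Suc_shift del: prod.lessThan_Suc)
  also have "\<dots> = (\<Sum>l<D. f l) * (\<Sum>w\<in>documents D m. \<Prod>t<m. f (w ! t))"
    by (simp add: sum.cartesian_product[symmetric] sum_product)
  finally show ?case using Suc by simp
qed

text \<open>Terms with \<open>P x = 0\<close> vanish because \<open>y / 0 = 0\<close>; all lemmas below assume
  \<open>Q x = 0\<close> wherever \<open>P x = 0\<close>.\<close>
definition chi2_div :: "'a set \<Rightarrow> ('a \<Rightarrow> real) \<Rightarrow> ('a \<Rightarrow> real) \<Rightarrow> real" where
  "chi2_div X P Q = (\<Sum>x\<in>X. (Q x - P x)\<^sup>2 / P x)"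

lemma chi2_div_eq_sum_sq_div:
  assumes P0: "\<And>x. x \<in> X \<Longrightarrow> P x \<ge> 0" and PQ: "\<And>x. x \<in> X \<Longrightarrow> P x = 0 \<Longrightarrow> Q x = 0"
    and "sum P X = 1" "sum Q X = 1"
  shows "chi2_div X P Q = (\<Sum>x\<in>X. (Q x)\<^sup>2 / P x) - 1"
proof -
  have "chi2_div X P Q = (\<Sum>x\<in>X. (Q x)\<^sup>2 / P x - 2 * Q x + P x)"
    unfolding chi2_div_def
  proof (intro sum.cong refl)
    fix x assume "x \<in> X"
    then show "(Q x - P x)\<^sup>2 / P x = (Q x)\<^sup>2 / P x - 2 * Q x + P x"
      using P0 PQ by (cases "P x = 0") (simp_all add: field_simps power2_eq_square)
  qed
  then show ?thesis
    using assms by (simp add: sum.distrib sum_subtractf sum_distrib_left[symmetric])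
qed

lemma abs_diff_le_chi2_term:
  fixes P Q :: real
  assumes "P \<ge> 0" "P = 0 \<Longrightarrow> Q = 0"
  shows "\<bar>Q - P\<bar> \<le> P / 4 + (Q - P)\<^sup>2 / P"
proof (cases "P = 0")
  case False
  then have P: "P > 0" using assms by simp
  have "\<bar>Q - P\<bar> * P \<le> P * P / 4 + (Q - P)\<^sup>2"
    using zero_le_power2[of "P / 2 - \<bar>Q - P\<bar>"]
    by (simp add: power2_eq_square algebra_simps abs_mult_self_eq)
  then show ?thesis using P by (simp add: field_simps)
qed (use assms in simp)

lemma two_point_test_le:
  fixes \<phi>\<^sub>0 \<phi>\<^sub>1 :: "'a \<Rightarrow> real"
  assumes P0: "\<And>x. x \<in> X \<Longrightarrow> P x \<ge> 0" and PQ: "\<And>x. x \<in> X \<Longrightarrow> P x = 0 \<Longrightarrow> Q x = 0"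
    and P1: "sum P X = 1"
    and \<phi>: "\<And>x. x \<in> X \<Longrightarrow> 0 \<le> \<phi>\<^sub>0 x \<and> 0 \<le> \<phi>\<^sub>1 x \<and> \<phi>\<^sub>0 x + \<phi>\<^sub>1 x \<le> 1"
  shows "(\<Sum>x\<in>X. P x * \<phi>\<^sub>0 x) + (\<Sum>x\<in>X. Q x * \<phi>\<^sub>1 x) \<le> 5/4 + chi2_div X P Q"
proof -
  have "P x * \<phi>\<^sub>0 x + Q x * \<phi>\<^sub>1 x \<le> 5/4 * P x + (Q x - P x)\<^sup>2 / P x" if x: "x \<in> X" for x
  proof -
    have "P x * \<phi>\<^sub>0 x + Q x * \<phi>\<^sub>1 x = P x * (\<phi>\<^sub>0 x + \<phi>\<^sub>1 x) + (Q x - P x) * \<phi>\<^sub>1 x"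
      by (simp add: algebra_simps)
    also have "\<dots> \<le> P x + \<bar>Q x - P x\<bar>"
    proof (intro add_mono)
      show "P x * (\<phi>\<^sub>0 x + \<phi>\<^sub>1 x) \<le> P x"
        using \<phi>[OF x] P0[OF x] by (simp add: mult_left_le)
      have "(Q x - P x) * \<phi>\<^sub>1 x \<le> \<bar>Q x - P x\<bar> * \<phi>\<^sub>1 x"
        using \<phi>[OF x] by (intro mult_right_mono) auto
      also have "\<dots> \<le> \<bar>Q x - P x\<bar>"
        using \<phi>[OF x] by (simp add: mult_left_le)
      finally show "(Q x - P x) * \<phi>\<^sub>1 x \<le> \<bar>Q x - P x\<bar>" .
    qed
    also have "\<dots> \<le> 5/4 * P x + (Q x - P x)\<^sup>2 / P x"
      using abs_diff_le_chi2_term[of "P x" "Q x"] P0[OF x] PQ[OF x] by simp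
    finally show ?thesis .
  qed
  then have "(\<Sum>x\<in>X. P x * \<phi>\<^sub>0 x + Q x * \<phi>\<^sub>1 x) \<le> (\<Sum>x\<in>X. 5/4 * P x + (Q x - P x)\<^sup>2 / P x)"
    by (rule sum_mono)
  then show ?thesis
    using P1 by (simp add: sum.distrib sum_divide_distrib[symmetric] sum_distrib_left[symmetric] chi2_div_def)
qed

lemma chi2_div_documents:
  fixes p q :: "nat \<Rightarrow> real"
  assumes p0: "\<And>l. l < D \<Longrightarrow> p l \<ge> 0" and pq: "\<And>l. l < D \<Longrightarrow> p l = 0 \<Longrightarrow> q l = 0"
    and p1: "(\<Sum>l<D. p l) = 1" and q1: "(\<Sum>l<D. q l) = 1"
  shows "chi2_div (documents D m) (\<lambda>w. \<Prod>t<m. p (w ! t)) (\<lambda>w. \<Prod>t<m. q (w ! t))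
       = (1 + chi2_div {..<D} p q) ^ m - 1"
proof -
  have "chi2_div (documents D m) (\<lambda>w. \<Prod>t<m. p (w ! t)) (\<lambda>w. \<Prod>t<m. q (w ! t))
      = (\<Sum>w\<in>documents D m. (\<Prod>t<m. q (w ! t))\<^sup>2 / (\<Prod>t<m. p (w ! t))) - 1"
  proof (rule chi2_div_eq_sum_sq_div)
    fix w assume w: "w \<in> documents D m"
    show "0 \<le> (\<Prod>t<m. p (w ! t))"
      using p0 nth_document_less[OF w] by (intro prod_nonneg) auto
    show "(\<Prod>t<m. q (w ! t)) = 0" if "(\<Prod>t<m. p (w ! t)) = 0"
      using that pq nth_document_less[OF w] by auto
  qed (simp_all add: sum_documents_prod p1 q1)
  also have "(\<Sum>w\<in>documents D m. (\<Prod>t<m. q (w ! t))\<^sup>2 / (\<Prod>t<m. p (w ! t)))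
      = (\<Sum>l<D. (q l)\<^sup>2 / p l) ^ m"
    by (simp add: sum_documents_prod[symmetric] prod_dividef prod_power_distrib)
  also have "(\<Sum>l<D. (q l)\<^sup>2 / p l) = 1 + chi2_div {..<D} p q"
    using chi2_div_eq_sum_sq_div[of "{..<D}" p q] p0 pq p1 q1 by simp
  finally show ?thesis .
qed

lemma two_point_documents_less:
  fixes p q :: "nat \<Rightarrow> real" and alg :: "nat list \<Rightarrow> 'b pmf"
  assumes p0: "\<And>l. l < D \<Longrightarrow> p l \<ge> 0" and pq: "\<And>l. l < D \<Longrightarrow> p l = 0 \<Longrightarrow> q l = 0"
    and p1: "(\<Sum>l<D. p l) = 1" and q1: "(\<Sum>l<D. q l) = 1"
    and close: "(1 + chi2_div {..<D} p q) ^ m < 5/4" and "T\<^sub>0 \<noteq> T\<^sub>1"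
  shows "(\<Sum>w\<in>documents D m. (\<Prod>t<m. p (w ! t)) * pmf (alg w) T\<^sub>0)
       + (\<Sum>w\<in>documents D m. (\<Prod>t<m. q (w ! t)) * pmf (alg w) T\<^sub>1) < 3/2"
proof -
  have "pmf (alg w) T\<^sub>0 + pmf (alg w) T\<^sub>1 \<le> 1" for w
    using measure_measure_pmf_finite[of "{T\<^sub>0, T\<^sub>1}" "alg w"] \<open>T\<^sub>0 \<noteq> T\<^sub>1\<close>
      measure_pmf.prob_le_1[of "alg w" "{T\<^sub>0, T\<^sub>1}"] by simp
  then have "(\<Sum>w\<in>documents D m. (\<Prod>t<m. p (w ! t)) * pmf (alg w) T\<^sub>0)
       + (\<Sum>w\<in>documents D m. (\<Prod>t<m. q (w ! t)) * pmf (alg w) T\<^sub>1)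
      \<le> 5/4 + chi2_div (documents D m) (\<lambda>w. \<Prod>t<m. p (w ! t)) (\<lambda>w. \<Prod>t<m. q (w ! t))"
    using p0 pq nth_document_less
    by (intro two_point_test_le) (auto simp: sum_documents_prod p1 intro!: prod_nonneg bexI)
  also have "\<dots> < 3/2"
    using close by (simp add: chi2_div_documents[OF p0 pq p1 q1])
  finally show ?thesis .
qed

section \<open>The sign-matrix certificate\<close>

lemma max_norm_le:
  assumes "p > 0" "q > 0" "\<And>i j. i < p \<Longrightarrow> j < q \<Longrightarrow> \<bar>M i j\<bar> \<le> c"
  shows "max_norm p q M \<le> c"
proof -
  have eq: "{\<bar>M i j\<bar> | i j. i < p \<and> j < q} = (\<lambda>(i, j). \<bar>M i j\<bar>) ` ({..<p} \<times> {..<q})"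
    by auto
  have "(0, 0) \<in> {..<p} \<times> {..<q}" using assms by auto
  then show ?thesis
    unfolding max_norm_def eq using assms(3) by (subst Max_le_iff) auto
qed

lemma sum_topic_matrix_column:
  assumes "S j \<subseteq> {..<D}" "S j \<noteq> {}"
  shows "(\<Sum>l<D. topic_matrix S l j) = 1"
proof -
  have "finite (S j)" using assms(1) finite_subset by blast
  moreover have "{..<D} \<inter> S j = S j" using assms(1) by auto
  ultimately show ?thesis
    unfolding topic_matrix_def using assms(2) by (simp add: sum.inter_restrict[symmetric])
qed

definition sign_matrix :: "(nat \<Rightarrow> nat set) \<Rightarrow> nat \<Rightarrow> nat \<Rightarrow> real" where
  "sign_matrix S i l = (if l \<in> S i then 1 else -1)"

lemma mat_mult_sign_topic_matrix:
  assumes "S j \<subseteq> {..<D}"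
  shows "mat_mult D (sign_matrix S) (topic_matrix S) i j
       = (2 * real (card (S i \<inter> S j)) - real (card (S j))) / real (card (S j))"
proof -
  have fin: "finite (S j)" using assms finite_subset by blast
  have "mat_mult D (sign_matrix S) (topic_matrix S) i j
      = (\<Sum>l\<in>S j. sign_matrix S i l) / real (card (S j))"
    unfolding mat_mult_def topic_matrix_def sum_divide_distrib
    using assms by (simp add: sum.inter_restrict[symmetric] Int_absorb1 if_distrib cong: if_cong)
  also have "(\<Sum>l\<in>S j. sign_matrix S i l) = real (card (S j \<inter> S i)) - real (card (S j - S i))"
    unfolding sign_matrix_def using fin by (simp add: sum.If_cases Diff_eq)
  also have "real (card (S j - S i)) = real (card (S j)) - real (card (S j \<inter> S i))"
    using card_Diff_subset_Int[of "S j" "S i"] card_mono[of "S j" "S j \<inter> S i"] fin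
    by (simp add: card_Diff_subset Int_commute Diff_Int2 of_nat_diff)
  finally show ?thesis by (simp add: Int_commute)
qed

lemma lambda_delta_topic_matrix_le_1:
  fixes S :: "nat \<Rightarrow> nat set"
  assumes k: "k > 0" and D: "D > 0" and Ssub: "\<And>i. i < k \<Longrightarrow> S i \<subseteq> {..<D}"
    and large: "\<And>j. j < k \<Longrightarrow> real D \<le> 4 * real (card (S j))"
    and halves: "\<And>i j. i < k \<Longrightarrow> j < k \<Longrightarrow> i \<noteq> j \<Longrightarrow>
                  \<bar>2 * real (card (S i \<inter> S j)) - real (card (S j))\<bar> \<le> t"
    and \<delta>: "4 * t / real D \<le> \<delta>" "\<delta> \<ge> 0"
  shows "lambda_delta k D \<delta> (topic_matrix S) \<le> 1"
proof -
  let ?B = "sign_matrix S"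
  have "max_norm k k (\<lambda>i j. mat_mult D ?B (topic_matrix S) i j - id_mat i j) \<le> \<delta>"
  proof (intro max_norm_le k)
    fix i j assume ij: "i < k" "j < k"
    have card_large: "real (card (S j)) \<ge> real D / 4" using large[OF ij(2)] by simp
    then have "card (S j) > 0" using D by (simp add: field_simps)
    show "\<bar>mat_mult D ?B (topic_matrix S) i j - id_mat i j\<bar> \<le> \<delta>"
    proof (cases "i = j")
      case True
      then show ?thesis
        using \<open>card (S j) > 0\<close> \<delta>(2) by (simp add: mat_mult_sign_topic_matrix[of S j D, OF Ssub[OF ij(2)]] id_mat_def)
    next
      case False
      have "\<bar>mat_mult D ?B (topic_matrix S) i j - id_mat i j\<bar>
           = \<bar>2 * real (card (S i \<inter> S j)) - real (card (S j))\<bar> / real (card (S j))"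
        using False by (simp add: mat_mult_sign_topic_matrix[of S j D, OF Ssub[OF ij(2)]] id_mat_def)
      also have "\<dots> \<le> t / (real D / 4)"
        using halves[OF ij False] card_large D by (intro frac_le) auto
      finally show ?thesis using \<delta>(1) by (simp add: mult.commute)
    qed
  qed
  then have "lambda_delta k D \<delta> (topic_matrix S) \<le> ereal (max_norm k D ?B)"
    unfolding lambda_delta_def by (intro Inf_lower) blast
  also have "max_norm k D ?B \<le> 1"
    using k D by (intro max_norm_le) (auto simp: sign_matrix_def)
  finally show ?thesis by (simp add: one_ereal_def)
qed

section \<open>Two indistinguishable mixtures\<close>

lemma sum_lessThan_if_less:
  fixes f :: "nat \<Rightarrow> 'a::comm_monoid_add"
  assumes "s \<le> k"
  shows "(\<Sum>j<k. if j < s then f j else 0) = (\<Sum>j<s. f j)"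
proof -
  have "(\<Sum>j<k. if j < s then f j else 0) = sum f ({..<k} \<inter> {j. j < s})"
    by (simp add: sum.inter_restrict)
  also have "{..<k} \<inter> {j. j < s} = {..<s}" using assms by auto
  finally show ?thesis .
qed

definition uniform_mix :: "nat \<Rightarrow> nat \<Rightarrow> real" where
  "uniform_mix s i = (if i < s then 1 / real s else 0)"

lemma uniform_mix_in_prob_simplex:
  assumes "0 < s" "s \<le> k"
  shows "uniform_mix s \<in> prob_simplex k"
proof -
  have "(\<Sum>i<k. uniform_mix s i) = (\<Sum>i<s. 1 / real s)"
    unfolding uniform_mix_def using sum_lessThan_if_less[OF assms(2)] .
  then show ?thesis
    using assms by (auto simp: prob_simplex_def uniform_mix_def)
qed

lemma supp_uniform_mix: "s \<le> k \<Longrightarrow> supp k (uniform_mix s) = {..<s}"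
  by (auto simp: supp_def uniform_mix_def)

lemma word_prob_uniform_mix:
  assumes "s \<le> k"
  shows "word_prob k A (uniform_mix s) l = (\<Sum>j<s. A l j) / real s"
proof -
  have "word_prob k A (uniform_mix s) l = (\<Sum>j<k. if j < s then A l j / real s else 0)"
    unfolding word_prob_def uniform_mix_def by (intro sum.cong) auto
  then show ?thesis
    using sum_lessThan_if_less[OF assms] by (simp add: sum_divide_distrib)
qed

lemma word_prob_uniform_mix_pred:
  assumes "2 \<le> r" "r \<le> k"
  shows "word_prob k A (uniform_mix r) l
       = (A l (r - 1) + (real r - 1) * word_prob k A (uniform_mix (r - 1)) l) / real r"
proof -
  have "{..<r} = insert (r - 1) {..<r - 1}" using assms(1) by auto
  then show ?thesis
    using assms by (simp add: word_prob_uniform_mix of_nat_diff)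
qed

lemma sum_word_prob_uniform_mix:
  assumes "0 < s" "s \<le> k" "\<And>j. j < s \<Longrightarrow> (\<Sum>l<D. A l j) = 1"
  shows "(\<Sum>l<D. word_prob k A (uniform_mix s) l) = 1"
proof -
  have "(\<Sum>l<D. word_prob k A (uniform_mix s) l) = (\<Sum>j<s. \<Sum>l<D. A l j) / real s"
    using assms(2) by (simp add: word_prob_uniform_mix sum_divide_distrib[symmetric] sum.swap[of _ "{..<D}"])
  then show ?thesis using assms(1,3) by simp
qed

lemma uniform_mix_sparse:
  assumes "0 < s" "s \<le> r" "s \<le> k"
  shows "card (supp k (uniform_mix s)) \<le> r \<and> (\<forall>i \<in> supp k (uniform_mix s). uniform_mix s i \<ge> 1 / real r)"
  using assms by (simp add: supp_uniform_mix uniform_mix_def frac_le)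

lemma word_prob_topic_matrix_nonneg:
  "x \<in> prob_simplex k \<Longrightarrow> 0 \<le> word_prob k (topic_matrix S) x l"
  unfolding word_prob_def prob_simplex_def topic_matrix_def by (auto intro!: sum_nonneg)

lemma word_prob_uniform_mix_pred_eq_0:
  assumes "2 \<le> r" "r \<le> k" "word_prob k (topic_matrix S) (uniform_mix r) l = 0"
  shows "word_prob k (topic_matrix S) (uniform_mix (r - 1)) l = 0"
proof -
  have "topic_matrix S l (r - 1) + (real r - 1) * word_prob k (topic_matrix S) (uniform_mix (r - 1)) l = 0"
    using assms word_prob_uniform_mix_pred[of r k "topic_matrix S" l] by simp
  moreover have "word_prob k (topic_matrix S) (uniform_mix (r - 1)) l \<ge> 0"
    using assms by (intro word_prob_topic_matrix_nonneg uniform_mix_in_prob_simplex) auto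
  ultimately show ?thesis
    using assms by (simp add: topic_matrix_def add_nonneg_eq_0_iff split: if_splits)
qed

lemma chi2_mix_term_le:
  fixes a q r :: real
  assumes r: "r \<ge> 2" and a: "a \<ge> 0" and q: "q \<ge> 0"
  defines "s \<equiv> a + (r - 1) * q"
  shows "(q - s / r)\<^sup>2 / (s / r) \<le> q / (r * (r - 1)) + a\<^sup>2 / (r * s)"
proof (cases "s = 0")
  case True
  then show ?thesis using r q by simp
next
  case False
  have "s \<ge> 0" using r a q by (simp add: s_def)
  with False have s: "s > 0" by simp
  have "q - s / r = (q - a) / r" using r by (simp add: s_def field_simps)
  then have "(q - s / r)\<^sup>2 / (s / r) = (q - a)\<^sup>2 / (r * s)"
    using r s by (simp add: power2_eq_square)
  also have "\<dots> \<le> (q\<^sup>2 + a\<^sup>2) / (r * s)"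
    using a q r s by (intro divide_right_mono) (auto simp: power2_eq_square algebra_simps)
  also have "q\<^sup>2 / (r * s) \<le> q / (r * (r - 1))"
  proof (cases "q = 0")
    case False
    then have "q\<^sup>2 / (r * s) \<le> q\<^sup>2 / (r * ((r - 1) * q))"
      using False a q r s by (intro divide_left_mono mult_pos_pos) (auto simp: s_def)
    then show ?thesis using False r by (simp add: power2_eq_square)
  qed simp
  then have "(q\<^sup>2 + a\<^sup>2) / (r * s) \<le> q / (r * (r - 1)) + a\<^sup>2 / (r * s)"
    by (simp add: add_divide_distrib)
  finally show ?thesis .
qed

lemma sq_div_mix_le:
  fixes a q r c :: real
  assumes r: "r \<ge> 2" and a: "0 \<le> a" "a \<le> c" and q: "q \<ge> 0"
  shows "a\<^sup>2 / (r * (a + (r - 1) * q)) \<le> c / r"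
    and "0 < d \<Longrightarrow> d \<le> q \<Longrightarrow> a\<^sup>2 / (r * (a + (r - 1) * q)) \<le> c\<^sup>2 / (r * (r - 1) * d)"
proof -
  show "a\<^sup>2 / (r * (a + (r - 1) * q)) \<le> c / r"
  proof (cases "a = 0")
    case False
    then have "a\<^sup>2 / (r * (a + (r - 1) * q)) \<le> a\<^sup>2 / (r * a)"
      using False a q r by (intro divide_left_mono mult_pos_pos add_pos_nonneg) auto
    also have "\<dots> \<le> c / r" using False a r by (simp add: power2_eq_square divide_right_mono)
    finally show ?thesis .
  qed (use a r in simp)
  assume d: "0 < d" "d \<le> q"
  have "a\<^sup>2 / (r * (a + (r - 1) * q)) \<le> c\<^sup>2 / (r * ((r - 1) * d))"
    using a d r by (intro frac_le power_mono mult_left_mono add_increasing) auto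
  then show "a\<^sup>2 / (r * (a + (r - 1) * q)) \<le> c\<^sup>2 / (r * (r - 1) * d)"
    by (simp add: mult.assoc)
qed

lemma word_prob_uniform_mix_ge_count:
  assumes "s \<le> k" and Ssub: "\<And>j. j < s \<Longrightarrow> S j \<subseteq> {..<D}"
  shows "real (card {j. j < s \<and> l \<in> S j}) / (real s * real D)
       \<le> word_prob k (topic_matrix S) (uniform_mix s) l"
proof -
  have "real (card {j. j < s \<and> l \<in> S j}) / real D = (\<Sum>j<s. if l \<in> S j then 1 / real D else 0)"
    by (simp add: sum.If_cases Int_def)
  also have "\<dots> \<le> (\<Sum>j<s. topic_matrix S l j)"
  proof (intro sum_mono)
    fix j assume "j \<in> {..<s}"
    then have "S j \<subseteq> {..<D}" using Ssub by simp
    then have "finite (S j)" "card (S j) \<le> D"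
      using finite_subset card_mono[of "{..<D}" "S j"] by auto
    then show "(if l \<in> S j then 1 / real D else 0) \<le> topic_matrix S l j"
      by (auto simp: topic_matrix_def card_gt_0_iff intro!: frac_le)
  qed
  finally show ?thesis
    using assms(1) by (simp add: word_prob_uniform_mix divide_right_mono mult.commute flip: divide_divide_eq_left)
qed

lemma sum_if_le_card:
  fixes x y :: real
  assumes "x \<ge> 0" "y \<ge> 0"
  shows "(\<Sum>l<D. if P l then x else y) \<le> real (card {l. l < D \<and> P l}) * x + real D * y"
proof -
  have "card ({..<D} - {l. P l}) \<le> D"
    using card_mono[of "{..<D}" "{..<D} - {l. P l}"] by auto
  then have "real (card ({..<D} - {l. P l})) * y \<le> real D * y"
    using assms(2) by (intro mult_right_mono) auto
  moreover have "{..<D} \<inter> {l. P l} = {l. l < D \<and> P l}" by auto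
  ultimately show ?thesis by (simp add: sum.If_cases Diff_eq)
qed

lemma chi2_term_uniform_mix_le:
  fixes S :: "nat \<Rightarrow> nat set" and l :: nat
  assumes r: "3 \<le> r" "r \<le> k" and D: "D > 0" and Ssub: "\<And>i. i < k \<Longrightarrow> S i \<subseteq> {..<D}"
    and large: "real D \<le> 4 * real (card (S (r - 1)))"
  defines "p \<equiv> word_prob k (topic_matrix S) (uniform_mix r)"
    and "q \<equiv> word_prob k (topic_matrix S) (uniform_mix (r - 1))"
    and "b \<equiv> real (card {i. i < r - 1 \<and> l \<in> S i})"
  shows "(q l - p l)\<^sup>2 / p l \<le> q l / (real r * (real r - 1))
           + (if b \<le> (real r - 1) / 4 then 4 / (real D * real r) else 64 / (real D * real r * (real r - 1)))"
proof -
  define a where "a = topic_matrix S l (r - 1)"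
  have rr: "real r \<ge> 3" using r by simp
  have q0: "q l \<ge> 0"
    unfolding q_def using r by (intro word_prob_topic_matrix_nonneg uniform_mix_in_prob_simplex) auto
  have "real (card (S (r - 1))) \<ge> real D / 4" using large by simp
  then have a: "0 \<le> a" "a \<le> 4 / real D"
    using D by (auto simp: a_def topic_matrix_def field_simps)
  have "p l = (a + (real r - 1) * q l) / real r"
    unfolding p_def q_def a_def using r by (intro word_prob_uniform_mix_pred) auto
  then have "(q l - p l)\<^sup>2 / p l \<le> q l / (real r * (real r - 1)) + a\<^sup>2 / (real r * (a + (real r - 1) * q l))"
    using chi2_mix_term_le[of "real r" a "q l"] rr a q0 by simp
  moreover have "a\<^sup>2 / (real r * (a + (real r - 1) * q l))
      \<le> (if b \<le> (real r - 1) / 4 then 4 / (real D * real r) else 64 / (real D * real r * (real r - 1)))"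
  proof (cases "b \<le> (real r - 1) / 4")
    case True
    then show ?thesis
      using sq_div_mix_le(1)[of "real r" a "4 / real D" "q l"] rr a q0 by simp
  next
    case False
    have "(real r - 1) * real D < (4 * b) * real D"
      using False D by (intro mult_strict_right_mono) auto
    then have "1 / (4 * real D) < b / ((real r - 1) * real D)"
      using rr D by (simp add: field_simps)
    also have "\<dots> \<le> q l"
      using word_prob_uniform_mix_ge_count[of "r - 1" k S D l] r Ssub
      by (simp add: q_def b_def of_nat_diff)
    finally have "a\<^sup>2 / (real r * (a + (real r - 1) * q l))
        \<le> (4 / real D)\<^sup>2 / (real r * (real r - 1) * (1 / (4 * real D)))"
      using rr a q0 D by (intro sq_div_mix_le(2)) auto
    also have "\<dots> = 64 / (real D * real r * (real r - 1))"
      using D rr by (simp add: power2_eq_square field_simps)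
    finally show ?thesis using False by simp
  qed
  ultimately show ?thesis by simp
qed

lemma chi2_div_uniform_mix_le:
  fixes S :: "nat \<Rightarrow> nat set"
  assumes r: "3 \<le> r" "r \<le> k" and D: "D > 0"
    and Ssub: "\<And>i. i < k \<Longrightarrow> S i \<subseteq> {..<D}" and ne: "\<And>i. i < r \<Longrightarrow> S i \<noteq> {}"
    and large: "real D \<le> 4 * real (card (S (r - 1)))"
    and few: "real (card {l. l < D \<and> real (card {i. i < r - 1 \<and> l \<in> S i}) \<le> (real r - 1) / 4})
              \<le> 2 * real D / real r"
  shows "chi2_div {..<D} (word_prob k (topic_matrix S) (uniform_mix r))
           (word_prob k (topic_matrix S) (uniform_mix (r - 1))) \<le> 140 / real r ^ 2"
proof -
  define p where "p = word_prob k (topic_matrix S) (uniform_mix r)"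
  define q where "q = word_prob k (topic_matrix S) (uniform_mix (r - 1))"
  define b where "b l = real (card {i. i < r - 1 \<and> l \<in> S i})" for l
  define e where "e l = (if b l \<le> (real r - 1) / 4 then 4 / (real D * real r)
      else 64 / (real D * real r * (real r - 1)))" for l
  have rr: "real r \<ge> 3" using r by simp
  have q1: "(\<Sum>l<D. q l) = 1"
    unfolding q_def using r Ssub ne by (intro sum_word_prob_uniform_mix sum_topic_matrix_column) auto
  have "chi2_div {..<D} p q \<le> (\<Sum>l<D. q l) / (real r * (real r - 1)) + (\<Sum>l<D. e l)"
    unfolding chi2_div_def sum_divide_distrib sum.distrib[symmetric] p_def q_def e_def b_def
    by (intro sum_mono chi2_term_uniform_mix_le r D Ssub large)
  also have "\<dots> \<le> 1 / (real r * (real r - 1)) + ((2 * real D / real r) * (4 / (real D * real r))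
        + real D * (64 / (real D * real r * (real r - 1))))"
    unfolding q1 e_def
    using sum_if_le_card[where x="4 / (real D * real r)" and y="64 / (real D * real r * (real r - 1))"
        and D=D and P="\<lambda>l. b l \<le> (real r - 1) / 4"]
      few rr mult_right_mono[OF few, of "4 / (real D * real r)"]
    by (simp add: b_def)
  also have "\<dots> = 65 / (real r * (real r - 1)) + 8 / real r ^ 2"
  proof -
    have "(2 * real D / real r) * (4 / (real D * real r)) = 8 / real r ^ 2"
      using D rr by (simp add: field_simps power2_eq_square)
    moreover have "real D * (64 / (real D * real r * (real r - 1))) = 64 / (real r * (real r - 1))"
      using D by simp
    ultimately show ?thesis by (simp add: add_divide_distrib[symmetric])
  qed
  also have "\<dots> \<le> 130 / real r ^ 2 + 8 / real r ^ 2"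
    using rr by (simp add: field_simps power2_eq_square)
  also have "\<dots> \<le> 140 / real r ^ 2"
    by (simp add: add_divide_distrib[symmetric] divide_right_mono)
  finally show ?thesis by (simp add: p_def q_def)
qed

lemma chi2_div_nonneg: "(\<And>x. x \<in> X \<Longrightarrow> P x \<ge> 0) \<Longrightarrow> chi2_div X P Q \<ge> 0"
  unfolding chi2_div_def by (intro sum_nonneg divide_nonneg_nonneg) auto

definition support_recovery_fails ::
    "nat \<Rightarrow> nat \<Rightarrow> nat \<Rightarrow> nat \<Rightarrow> (nat \<Rightarrow> nat \<Rightarrow> real) \<Rightarrow> bool" where
  "support_recovery_fails k D r m A \<longleftrightarrow>
     (\<forall>alg :: nat list \<Rightarrow> nat set pmf. \<exists>x \<in> prob_simplex k.
        card (supp k x) \<le> r \<and> (\<forall>i \<in> supp k x. x i \<ge> 1 / real r) \<and>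
        output_prob k D m A alg x (supp k x) < 3/4)"

lemma support_recovery_fails_topic_matrix:
  fixes S :: "nat \<Rightarrow> nat set"
  assumes r: "3 \<le> r" "r \<le> k" and D: "D > 0"
    and Ssub: "\<And>i. i < k \<Longrightarrow> S i \<subseteq> {..<D}" and ne: "\<And>i. i < r \<Longrightarrow> S i \<noteq> {}"
    and large: "real D \<le> 4 * real (card (S (r - 1)))"
    and few: "real (card {l. l < D \<and> real (card {i. i < r - 1 \<and> l \<in> S i}) \<le> (real r - 1) / 4})
              \<le> 2 * real D / real r"
    and short: "(1 + 140 / real r ^ 2) ^ m < 5/4"
  shows "support_recovery_fails k D r m (topic_matrix S)"
  unfolding support_recovery_fails_def
proof
  fix alg :: "nat list \<Rightarrow> nat set pmf"
  define x\<^sub>0 where "x\<^sub>0 = uniform_mix r"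
  define x\<^sub>1 where "x\<^sub>1 = uniform_mix (r - 1)"
  define p where "p = word_prob k (topic_matrix S) x\<^sub>0"
  define q where "q = word_prob k (topic_matrix S) x\<^sub>1"
  have simplex: "x\<^sub>0 \<in> prob_simplex k" "x\<^sub>1 \<in> prob_simplex k"
    unfolding x\<^sub>0_def x\<^sub>1_def using r by (auto intro: uniform_mix_in_prob_simplex)
  have supp_x: "supp k x\<^sub>0 = {..<r}" "supp k x\<^sub>1 = {..<r - 1}"
    unfolding x\<^sub>0_def x\<^sub>1_def using r by (auto simp: supp_uniform_mix)
  have p0: "p l \<ge> 0" and q0: "q l \<ge> 0" for l
    unfolding p_def q_def using simplex by (auto intro: word_prob_topic_matrix_nonneg)
  have pq: "q l = 0" if "p l = 0" for l
    using that r unfolding p_def q_def x\<^sub>0_def x\<^sub>1_def by (intro word_prob_uniform_mix_pred_eq_0) auto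
  have col: "(\<Sum>l<D. topic_matrix S l j) = 1" if "j < r" for j
    using that r by (intro sum_topic_matrix_column Ssub ne) auto
  have p1: "(\<Sum>l<D. p l) = 1" and q1: "(\<Sum>l<D. q l) = 1"
    unfolding p_def q_def x\<^sub>0_def x\<^sub>1_def using r col by (auto intro!: sum_word_prob_uniform_mix)
  have "chi2_div {..<D} p q \<le> 140 / real r ^ 2"
    unfolding p_def q_def x\<^sub>0_def x\<^sub>1_def by (rule chi2_div_uniform_mix_le[OF r D Ssub ne large few])
  then have "(1 + chi2_div {..<D} p q) ^ m \<le> (1 + 140 / real r ^ 2) ^ m"
    using chi2_div_nonneg[of "{..<D}" p q] p0 by (intro power_mono) auto
  then have close: "(1 + chi2_div {..<D} p q) ^ m < 5/4"
    using short by linarith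
  have "supp k x\<^sub>0 \<noteq> supp k x\<^sub>1"
    unfolding supp_x using r by (simp add: lessThan_eq_iff)
  then have "output_prob k D m (topic_matrix S) alg x\<^sub>0 (supp k x\<^sub>0)
      + output_prob k D m (topic_matrix S) alg x\<^sub>1 (supp k x\<^sub>1) < 3/2"
    unfolding output_prob_def p_def[symmetric] q_def[symmetric]
    using p0 pq p1 q1 close by (intro two_point_documents_less)
  then have "output_prob k D m (topic_matrix S) alg x\<^sub>0 (supp k x\<^sub>0) < 3/4
      \<or> output_prob k D m (topic_matrix S) alg x\<^sub>1 (supp k x\<^sub>1) < 3/4"
    by linarith
  moreover have "card (supp k x) \<le> r \<and> (\<forall>i \<in> supp k x. x i \<ge> 1 / real r)"
    if "x = x\<^sub>0 \<or> x = x\<^sub>1" for x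
    using that r uniform_mix_sparse[of r r k] uniform_mix_sparse[of "r - 1" r k]
    unfolding x\<^sub>0_def x\<^sub>1_def by auto
  ultimately show "\<exists>x \<in> prob_simplex k. card (supp k x) \<le> r \<and> (\<forall>i \<in> supp k x. x i \<ge> 1 / real r)
      \<and> output_prob k D m (topic_matrix S) alg x (supp k x) < 3/4"
    using simplex by blast
qed

section \<open>The random topic matrix\<close>

text \<open>The random sets are encoded word by word: row \<open>\<omega> l\<close> records which topics contain
  word \<open>l\<close>, so the \<open>D\<close> rows are independent and uniform on \<open>row_space k\<close>.\<close>
definition row_space :: "nat \<Rightarrow> (nat \<Rightarrow> bool) set" where
  "row_space k = PiE_dflt {..<k} False (\<lambda>_. UNIV)"

definition incidence_pmf :: "nat \<Rightarrow> nat \<Rightarrow> (nat \<Rightarrow> nat \<Rightarrow> bool) pmf" where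
  "incidence_pmf k D = Pi_pmf {..<D} (\<lambda>_. False) (\<lambda>_. pmf_of_set (row_space k))"

text \<open>The value \<open>undefined\<close> outside \<open>[k]\<close> makes \<open>topic_sets k D \<omega>\<close> an element of
  the extensional function space used by \<open>subsets_prob\<close>.\<close>
definition topic_sets :: "nat \<Rightarrow> nat \<Rightarrow> (nat \<Rightarrow> nat \<Rightarrow> bool) \<Rightarrow> nat \<Rightarrow> nat set" where
  "topic_sets k D \<omega> i = (if i < k then {l. l < D \<and> \<omega> l i} else undefined)"

lemma finite_row_space: "finite (row_space k)"
  unfolding row_space_def by (intro finite_PiE_dflt) auto

lemma row_space_nonempty: "row_space k \<noteq> {}"
  unfolding row_space_def PiE_dflt_def by blast

lemma subsets_prob_eq_incidence:
  "subsets_prob k D E = measure_pmf.prob (incidence_pmf k D) {\<omega>. E (topic_sets k D \<omega>)}"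
proof -
  define \<Omega> where "\<Omega> = PiE_dflt {..<D} (\<lambda>_. False) (\<lambda>_. row_space k)"
  define \<S> where "\<S> = PiE {..<k} (\<lambda>_. Pow {..<D})"
  have "(\<lambda>_ _. False) \<in> \<Omega>"
    by (simp add: \<Omega>_def row_space_def PiE_dflt_def)
  then have \<Omega>: "finite \<Omega>" "\<Omega> \<noteq> {}"
    unfolding \<Omega>_def using finite_row_space by (blast intro: finite_PiE_dflt)+
  have "incidence_pmf k D = pmf_of_set \<Omega>"
    unfolding incidence_pmf_def \<Omega>_def using finite_row_space row_space_nonempty
    by (intro Pi_pmf_of_set) auto
  moreover have "inj_on (topic_sets k D) \<Omega>"
  proof (rule inj_onI, intro ext)
    fix \<omega> \<omega>' l i assume "\<omega> \<in> \<Omega>" "\<omega>' \<in> \<Omega>" "topic_sets k D \<omega> = topic_sets k D \<omega>'"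
    then show "\<omega> l i = \<omega>' l i"
      unfolding \<Omega>_def row_space_def PiE_dflt_def topic_sets_def
      by (cases "l < D \<and> i < k") (auto dest!: fun_cong[of _ _ i] simp: set_eq_iff)
  qed
  moreover have "topic_sets k D ` \<Omega> = \<S>"
  proof (intro equalityI subsetI)
    fix S assume S: "S \<in> \<S>"
    define \<omega> where "\<omega> l i = (l < D \<and> i < k \<and> l \<in> S i)" for l i
    have "\<omega> \<in> \<Omega>" by (auto simp: \<omega>_def \<Omega>_def PiE_dflt_def row_space_def)
    moreover have "topic_sets k D \<omega> = S"
    proof
      fix i show "topic_sets k D \<omega> i = S i"
        using S by (auto simp: topic_sets_def \<omega>_def \<S>_def PiE_def extensional_def)
    qed
    ultimately show "S \<in> topic_sets k D ` \<Omega>" by blast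
  qed (auto simp: \<S>_def topic_sets_def PiE_def extensional_def)
  ultimately have "map_pmf (topic_sets k D) (incidence_pmf k D) = pmf_of_set \<S>"
    using map_pmf_of_set_inj \<Omega> by metis
  moreover have "finite \<S>" "\<S> \<noteq> {}"
    using \<Omega> \<open>topic_sets k D ` \<Omega> = \<S>\<close> by (auto simp: \<S>_def intro!: finite_PiE)
  ultimately have "measure_pmf.prob (incidence_pmf k D) {\<omega>. E (topic_sets k D \<omega>)}
      = real (card (\<S> \<inter> {S. E S})) / real (card \<S>)"
    by (metis measure_map_pmf measure_pmf_of_set vimage_Collect_eq)
  then show ?thesis
    unfolding subsets_prob_def \<S>_def by (simp add: Int_def conj_commute)
qed

section \<open>Concentration\<close>

lemma hoeffding_Pi_pmf:
  fixes g :: "'i \<Rightarrow> 'a \<Rightarrow> real" and p :: "'i \<Rightarrow> 'a pmf"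
  assumes fin: "finite I" and J: "J \<subseteq> I" "J \<noteq> {}"
    and bnd: "\<And>i x. g i x \<in> {a..b}" and ab: "a < b" and \<epsilon>: "\<epsilon> \<ge> 0"
  defines "\<mu> \<equiv> (\<Sum>i\<in>J. measure_pmf.expectation (p i) (g i))"
  shows "measure (Pi_pmf I d p) {\<omega>. (\<Sum>i\<in>J. g i (\<omega> i)) \<ge> \<mu> + \<epsilon>}
           \<le> exp (-2 * \<epsilon>\<^sup>2 / (real (card J) * (b - a)\<^sup>2))"
    and "measure (Pi_pmf I d p) {\<omega>. (\<Sum>i\<in>J. g i (\<omega> i)) \<le> \<mu> - \<epsilon>}
           \<le> exp (-2 * \<epsilon>\<^sup>2 / (real (card J) * (b - a)\<^sup>2))"
    and "measure (Pi_pmf I d p) {\<omega>. \<bar>(\<Sum>i\<in>J. g i (\<omega> i)) - \<mu>\<bar> \<ge> \<epsilon>}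
           \<le> 2 * exp (-2 * \<epsilon>\<^sup>2 / (real (card J) * (b - a)\<^sup>2))"
proof -
  let ?M = "measure_pmf (Pi_pmf I d p)"
  have finJ: "finite J" using fin J finite_subset by blast
  have ind0: "prob_space.indep_vars ?M (\<lambda>_. count_space UNIV) (\<lambda>x f. f x) I"
    by (rule indep_vars_Pi_pmf[OF fin])
  have ind1: "prob_space.indep_vars ?M (\<lambda>_. count_space UNIV) (\<lambda>x f. f x) J"
    by (rule prob_space.indep_vars_subset[OF measure_pmf.prob_space_axioms ind0 J(1)])
  have ind: "prob_space.indep_vars ?M (\<lambda>_. borel) (\<lambda>i \<omega>. g i (\<omega> i)) J"
    using prob_space.indep_vars_compose2[OF measure_pmf.prob_space_axioms ind1, of "\<lambda>i x. g i x" "\<lambda>_. borel"]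
    by simp
  have exp_eq: "measure_pmf.expectation (Pi_pmf I d p) (\<lambda>\<omega>. g i (\<omega> i)) = measure_pmf.expectation (p i) (g i)"
    if "i \<in> J" for i
  proof -
    have "map_pmf (\<lambda>f. f i) (Pi_pmf I d p) = p i" using that J fin by (auto simp: Pi_pmf_component)
    then have "measure_pmf.expectation (map_pmf (\<lambda>f. f i) (Pi_pmf I d p)) (g i) = measure_pmf.expectation (p i) (g i)"
      by simp
    then show ?thesis by simp
  qed
  have mu: "\<mu> = (\<Sum>i\<in>J. measure_pmf.expectation (Pi_pmf I d p) (\<lambda>\<omega>. g i (\<omega> i)))"
    unfolding \<mu>_def by (intro sum.cong refl exp_eq[symmetric])
  interpret H: Hoeffding_ineq ?M J "\<lambda>i \<omega>. g i (\<omega> i)" "\<lambda>_. a" "\<lambda>_. b" \<mu>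
    by unfold_locales (use finJ ind bnd mu in auto)
  have pos: "(\<Sum>i\<in>J. (b - a)\<^sup>2) > 0" using finJ J ab by (simp add: card_gt_0_iff)
  have eq: "(\<Sum>i\<in>J. (b - a)\<^sup>2) = real (card J) * (b - a)\<^sup>2" by simp
  show "measure (Pi_pmf I d p) {\<omega>. (\<Sum>i\<in>J. g i (\<omega> i)) \<ge> \<mu> + \<epsilon>}
           \<le> exp (-2 * \<epsilon>\<^sup>2 / (real (card J) * (b - a)\<^sup>2))"
    using H.Hoeffding_ineq_ge[OF \<epsilon> pos] unfolding eq by simp
  show "measure (Pi_pmf I d p) {\<omega>. (\<Sum>i\<in>J. g i (\<omega> i)) \<le> \<mu> - \<epsilon>}
           \<le> exp (-2 * \<epsilon>\<^sup>2 / (real (card J) * (b - a)\<^sup>2))"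
    using H.Hoeffding_ineq_le[OF \<epsilon> pos] unfolding eq by simp
  show "measure (Pi_pmf I d p) {\<omega>. \<bar>(\<Sum>i\<in>J. g i (\<omega> i)) - \<mu>\<bar> \<ge> \<epsilon>}
           \<le> 2 * exp (-2 * \<epsilon>\<^sup>2 / (real (card J) * (b - a)\<^sup>2))"
    using H.Hoeffding_ineq_abs_ge[OF \<epsilon> pos] unfolding eq by simp
qed

lemma sum_row_space_flip:
  fixes h :: "(nat \<Rightarrow> bool) \<Rightarrow> real"
  assumes "i < k"
  shows "(\<Sum>c\<in>row_space k. h (c(i := \<not> c i))) = (\<Sum>c\<in>row_space k. h c)"
proof -
  define flip where "flip c = c(i := \<not> c i)" for c :: "nat \<Rightarrow> bool"
  have flip_flip: "flip (flip c) = c" for c by (auto simp: flip_def)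
  then have "inj_on flip (row_space k)" by (metis inj_onI)
  moreover have "flip ` row_space k = row_space k"
  proof (intro equalityI subsetI)
    have flip_mem: "flip c \<in> row_space k" if "c \<in> row_space k" for c
      using that assms by (auto simp: flip_def row_space_def PiE_dflt_def)
    show "c \<in> row_space k" if "c \<in> flip ` row_space k" for c using that flip_mem by blast
    show "c \<in> flip ` row_space k" if "c \<in> row_space k" for c
      using that flip_mem flip_flip by (metis image_eqI)
  qed
  ultimately show ?thesis
    using sum.reindex[of flip "row_space k" h] by (simp add: flip_def)
qed

lemma expectation_row_indicator:
  assumes "j < k"
  shows "measure_pmf.expectation (pmf_of_set (row_space k)) (\<lambda>c. if c j then 1 else 0 :: real) = 1/2"
proof -
  let ?n = "\<lambda>b. (\<Sum>c\<in>row_space k. if c j = b then 1 else 0 :: real)"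
  have "?n False = ?n True"
    using sum_row_space_flip[OF assms, of "\<lambda>c. if c j = False then 1 else 0"] by simp
  moreover have "?n True + ?n False = (\<Sum>c\<in>row_space k. 1)"
    by (subst sum.distrib[symmetric]) (intro sum.cong, auto)
  moreover have "card (row_space k) > 0"
    using finite_row_space row_space_nonempty by (simp add: card_gt_0_iff)
  ultimately show ?thesis
    using finite_row_space row_space_nonempty by (simp add: integral_pmf_of_set)
qed

lemma expectation_row_sign:
  assumes "i < k" "i \<noteq> j"
  shows "measure_pmf.expectation (pmf_of_set (row_space k))
           (\<lambda>c. if c j then (if c i then 1 else -1) else 0 :: real) = 0"
proof -
  let ?g = "\<lambda>c. if c j then (if c i then 1 else -1) else 0 :: real"
  have "(\<Sum>c\<in>row_space k. - ?g c) = (\<Sum>c\<in>row_space k. ?g (c(i := \<not> c i)))"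
    using assms(2) by (intro sum.cong) auto
  then have "(\<Sum>c\<in>row_space k. - ?g c) = (\<Sum>c\<in>row_space k. ?g c)"
    using sum_row_space_flip[OF assms(1), of ?g] by simp
  then have "(\<Sum>c\<in>row_space k. ?g c) = 0" by (simp add: sum_negf)
  then show ?thesis using finite_row_space row_space_nonempty by (simp add: integral_pmf_of_set)
qed

lemma prob_row_few_topics:
  assumes "2 \<le> r" "r - 1 \<le> k"
  shows "measure_pmf.prob (pmf_of_set (row_space k))
           {c. real (card {i. i < r - 1 \<and> c i}) \<le> (real r - 1) / 4} \<le> exp (- (real r - 1) / 8)"
proof -
  let ?coin = "pmf_of_set (UNIV :: bool set)"
  have "pmf_of_set (row_space k) = Pi_pmf {..<k} False (\<lambda>_. ?coin)"
    unfolding row_space_def by (subst Pi_pmf_of_set) auto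
  moreover have "(\<Sum>i<r - 1. measure_pmf.expectation ?coin (\<lambda>b. if b then 1 else 0 :: real))
      - (real r - 1) / 4 = (real r - 1) / 4"
    using assms by (simp add: integral_pmf_of_set UNIV_bool of_nat_diff)
  moreover have "real (card {i. i < r - 1 \<and> c i}) = (\<Sum>i<r - 1. if c i then 1 else 0 :: real)" for c
    by (simp add: sum.If_cases Int_def)
  ultimately have "measure_pmf.prob (pmf_of_set (row_space k))
           {c. real (card {i. i < r - 1 \<and> c i}) \<le> (real r - 1) / 4}
      = measure_pmf.prob (Pi_pmf {..<k} False (\<lambda>_. ?coin))
           {c. (\<Sum>i<r - 1. if c i then 1 else 0 :: real)
             \<le> (\<Sum>i<r - 1. measure_pmf.expectation ?coin (\<lambda>b. if b then 1 else 0 :: real)) - (real r - 1) / 4}"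
    by (simp only:)
  also have "\<dots> \<le> exp (-2 * ((real r - 1) / 4)\<^sup>2 / (real (card {..<r - 1}) * (1 - 0)\<^sup>2))"
    using assms by (intro hoeffding_Pi_pmf(2)) (auto simp: lessThan_empty_iff)
  also have "-2 * ((real r - 1) / 4)\<^sup>2 / (real (card {..<r - 1}) * (1 - 0)\<^sup>2) = - (real r - 1) / 8"
    using assms by (simp add: of_nat_diff power2_eq_square field_simps)
  finally show ?thesis .
qed

lemma prob_small_topic:
  assumes "j < k" "D > 0"
  shows "measure_pmf.prob (incidence_pmf k D) {\<omega>. (\<Sum>l<D. if \<omega> l j then 1 else 0) \<le> real D / 4}
       \<le> exp (- real D / 8)"
proof -
  have mean: "(\<Sum>l<D. measure_pmf.expectation (pmf_of_set (row_space k)) (\<lambda>c. if c j then 1 else 0))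
      - real D / 4 = real D / 4"
    using expectation_row_indicator[OF assms(1)] by simp
  have "measure_pmf.prob (incidence_pmf k D)
      {\<omega>. (\<Sum>l<D. if \<omega> l j then 1 else 0)
        \<le> (\<Sum>l<D. measure_pmf.expectation (pmf_of_set (row_space k)) (\<lambda>c. if c j then 1 else 0))
           - real D / 4}
      \<le> exp (-2 * (real D / 4)\<^sup>2 / (real (card {..<D}) * (1 - 0)\<^sup>2))"
    unfolding incidence_pmf_def using assms
    by (intro hoeffding_Pi_pmf(2)[where g="\<lambda>_ c. if c j then 1 else 0"]) auto
  then have "measure_pmf.prob (incidence_pmf k D) {\<omega>. (\<Sum>l<D. if \<omega> l j then 1 else 0) \<le> real D / 4}
      \<le> exp (-2 * (real D / 4)\<^sup>2 / (real (card {..<D}) * (1 - 0)\<^sup>2))"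
    unfolding mean .
  also have "-2 * (real D / 4)\<^sup>2 / (real (card {..<D}) * (1 - 0)\<^sup>2) = - real D / 8"
    using assms by (simp add: power2_eq_square field_simps)
  finally show ?thesis .
qed

lemma prob_unbalanced_pair:
  assumes "i < k" "i \<noteq> j" "D > 0" "t \<ge> 0"
  shows "measure_pmf.prob (incidence_pmf k D)
           {\<omega>. t \<le> \<bar>\<Sum>l<D. if \<omega> l j then (if \<omega> l i then 1 else -1) else 0\<bar>}
       \<le> 2 * exp (- t\<^sup>2 / (2 * real D))"
proof -
  let ?g = "\<lambda>(l::nat) (c::nat \<Rightarrow> bool). if c j then (if c i then 1 else -1) else 0 :: real"
  have mean: "(\<Sum>l<D. measure_pmf.expectation (pmf_of_set (row_space k)) (?g l)) = 0"
    using expectation_row_sign[OF assms(1,2)] by simp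
  have "measure_pmf.prob (incidence_pmf k D)
      {\<omega>. t \<le> \<bar>(\<Sum>l<D. ?g l (\<omega> l))
        - (\<Sum>l<D. measure_pmf.expectation (pmf_of_set (row_space k)) (?g l))\<bar>}
      \<le> 2 * exp (-2 * t\<^sup>2 / (real (card {..<D}) * (1 - (-1))\<^sup>2))"
    unfolding incidence_pmf_def using assms by (intro hoeffding_Pi_pmf(3)) auto
  then have "measure_pmf.prob (incidence_pmf k D)
           {\<omega>. t \<le> \<bar>\<Sum>l<D. if \<omega> l j then (if \<omega> l i then 1 else -1) else 0\<bar>}
      \<le> 2 * exp (-2 * t\<^sup>2 / (real (card {..<D}) * (1 - (-1))\<^sup>2))"
    unfolding mean by simp
  also have "-2 * t\<^sup>2 / (real (card {..<D}) * (1 - (-1))\<^sup>2) = - t\<^sup>2 / (2 * real D)"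
    using assms by (simp add: power2_eq_square field_simps)
  finally show ?thesis .
qed

lemma exp_neg_le_inverse:
  fixes x :: real
  assumes x: "x \<ge> 226"
  shows "exp (- (x - 1) / 8) \<le> 1 / x"
proof -
  have "226 * x \<le> x * x" using x by (intro mult_right_mono) auto
  then have "256 * x \<le> (x + 15)\<^sup>2" by (simp add: power2_eq_square algebra_simps)
  then have "x \<le> (1 + (x - 1) / 16)\<^sup>2" by (simp add: power_divide add_divide_distrib[symmetric] field_simps)
  also have "\<dots> \<le> exp ((x - 1) / 16) ^ 2"
    using x by (intro power_mono exp_ge_add_one_self) auto
  also have "\<dots> = exp ((x - 1) / 8)"
    by (simp add: exp_add[symmetric] power2_eq_square)
  finally have "x \<le> exp ((x - 1) / 8)" .
  have "exp (- (x - 1) / 8) = 1 / exp ((x - 1) / 8)"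
    by (simp only: minus_divide_left[symmetric] exp_minus inverse_eq_divide)
  also have "\<dots> \<le> 1 / x"
    using \<open>x \<le> exp ((x - 1) / 8)\<close> x by (intro divide_left_mono) auto
  finally show ?thesis .
qed

text \<open>By Hoeffding a single word lies in fewer than \<open>(r - 1) / 4\<close> of the first \<open>r - 1\<close>
  topics with probability at most \<open>exp (- (r - 1) / 8) \<le> 1 / r\<close>; a second application of
  Hoeffding over the words bounds the number of such words.\<close>
lemma prob_many_sparse_words:
  assumes r: "226 \<le> r" "r \<le> k" and D: "D > 0"
  shows "measure_pmf.prob (incidence_pmf k D)
           {\<omega>. 2 * real D / real r
              < (\<Sum>l<D. if real (card {i. i < r - 1 \<and> \<omega> l i}) \<le> (real r - 1) / 4 then 1 else 0)}
       \<le> exp (- 2 * real D / real r ^ 2)"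
proof -
  define h where "h c = (if real (card {i. i < r - 1 \<and> c i}) \<le> (real r - 1) / 4 then 1 else 0 :: real)"
    for c :: "nat \<Rightarrow> bool"
  have "measure_pmf.expectation (pmf_of_set (row_space k)) h
      = measure_pmf.prob (pmf_of_set (row_space k)) {c. real (card {i. i < r - 1 \<and> c i}) \<le> (real r - 1) / 4}"
  proof -
    have "h = indicator {c. real (card {i. i < r - 1 \<and> c i}) \<le> (real r - 1) / 4}"
      by (auto simp: h_def indicator_def)
    then show ?thesis by simp
  qed
  also have "\<dots> \<le> 1 / real r"
    using order.trans[OF prob_row_few_topics exp_neg_le_inverse, of r k] r by simp
  finally have "real D * measure_pmf.expectation (pmf_of_set (row_space k)) h \<le> real D * (1 / real r)"
    by (intro mult_left_mono) auto
  then have "(\<Sum>l<D. measure_pmf.expectation (pmf_of_set (row_space k)) h) + real D / real r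
      \<le> 2 * real D / real r"
    by simp
  then have "measure_pmf.prob (incidence_pmf k D) {\<omega>. 2 * real D / real r < (\<Sum>l<D. h (\<omega> l))}
      \<le> measure_pmf.prob (incidence_pmf k D)
           {\<omega>. (\<Sum>l<D. measure_pmf.expectation (pmf_of_set (row_space k)) h) + real D / real r
              \<le> (\<Sum>l<D. h (\<omega> l))}"
    by (intro measure_pmf.finite_measure_mono) auto
  also have "\<dots> \<le> exp (-2 * (real D / real r)\<^sup>2 / (real (card {..<D}) * (1 - 0)\<^sup>2))"
    unfolding incidence_pmf_def using D r
    by (intro hoeffding_Pi_pmf(1)[where g="\<lambda>_. h"]) (auto simp: h_def)
  also have "-2 * (real D / real r)\<^sup>2 / (real (card {..<D}) * (1 - 0)\<^sup>2) = - 2 * real D / real r ^ 2"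
    using D r by (simp add: power2_eq_square field_simps)
  finally show ?thesis by (simp add: h_def)
qed

definition typical_incidence :: "nat \<Rightarrow> nat \<Rightarrow> nat \<Rightarrow> real \<Rightarrow> (nat \<Rightarrow> nat \<Rightarrow> bool) \<Rightarrow> bool" where
  "typical_incidence k D r t \<omega> \<longleftrightarrow>
     (\<forall>j<k. real D / 4 < (\<Sum>l<D. if \<omega> l j then 1 else 0)) \<and>
     (\<forall>i<k. \<forall>j<k. i \<noteq> j \<longrightarrow> \<bar>\<Sum>l<D. if \<omega> l j then (if \<omega> l i then 1 else -1) else 0\<bar> < t) \<and>
     (\<Sum>l<D. if real (card {i. i < r - 1 \<and> \<omega> l i}) \<le> (real r - 1) / 4 then 1 else 0)
        \<le> 2 * real D / real r"

lemma prob_not_typical_incidence: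
  assumes r: "226 \<le> r" "r \<le> k" and D: "D > 0" and t: "t \<ge> 0"
  shows "measure_pmf.prob (incidence_pmf k D) {\<omega>. \<not> typical_incidence k D r t \<omega>}
       \<le> real k * exp (- real D / 8) + real k ^ 2 * (2 * exp (- t\<^sup>2 / (2 * real D)))
          + exp (- 2 * real D / real r ^ 2)"
proof -
  let ?P = "measure_pmf.prob (incidence_pmf k D)"
  define small where "small j = {\<omega> :: nat \<Rightarrow> nat \<Rightarrow> bool. (\<Sum>l<D. if \<omega> l j then 1 else 0) \<le> real D / 4}" for j :: nat
  define unbalanced where "unbalanced = (\<lambda>(i, j). if i = j then {} else
      {\<omega> :: nat \<Rightarrow> nat \<Rightarrow> bool. t \<le> \<bar>\<Sum>l<D. if \<omega> l j then (if \<omega> l i then 1 else -1) else 0\<bar>})"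
  define sparse where "sparse = {\<omega> :: nat \<Rightarrow> nat \<Rightarrow> bool. 2 * real D / real r
      < (\<Sum>l<D. if real (card {i. i < r - 1 \<and> \<omega> l i}) \<le> (real r - 1) / 4 then 1 else 0)}"
  have "{\<omega>. \<not> typical_incidence k D r t \<omega>}
      \<subseteq> (\<Union>j<k. small j) \<union> (\<Union>ij\<in>{..<k} \<times> {..<k}. unbalanced ij) \<union> sparse"
  proof
    fix \<omega> assume "\<omega> \<in> {\<omega>. \<not> typical_incidence k D r t \<omega>}"
    then consider (small) j where "j < k" "\<omega> \<in> small j"
      | (unbalanced) i j where "i < k" "j < k" "i \<noteq> j"
          "t \<le> \<bar>\<Sum>l<D. if \<omega> l j then (if \<omega> l i then 1 else -1) else 0\<bar>"
      | (sparse) "\<omega> \<in> sparse"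
      unfolding typical_incidence_def small_def sparse_def by (auto simp: not_less)
    then show "\<omega> \<in> (\<Union>j<k. small j) \<union> (\<Union>ij\<in>{..<k} \<times> {..<k}. unbalanced ij) \<union> sparse"
    proof cases
      case unbalanced
      then have "\<omega> \<in> unbalanced (i, j)" by (simp add: unbalanced_def)
      then show ?thesis using unbalanced by blast
    qed blast+
  qed
  then have "?P {\<omega>. \<not> typical_incidence k D r t \<omega>}
      \<le> ?P ((\<Union>j<k. small j) \<union> (\<Union>ij\<in>{..<k} \<times> {..<k}. unbalanced ij) \<union> sparse)"
    by (intro measure_pmf.finite_measure_mono) auto
  also have "\<dots> \<le> ?P (\<Union>j<k. small j) + ?P (\<Union>ij\<in>{..<k} \<times> {..<k}. unbalanced ij) + ?P sparse"
    by (intro order.trans[OF measure_Un_le] add_mono order.refl measure_Un_le)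
       (auto simp: measure_pmf.emeasure_eq_measure)
  also have "\<dots> \<le> (\<Sum>j<k. ?P (small j)) + (\<Sum>ij\<in>{..<k} \<times> {..<k}. ?P (unbalanced ij)) + ?P sparse"
    using measure_pmf.finite_measure_subadditive_finite[of "{..<k}" small]
      measure_pmf.finite_measure_subadditive_finite[of "{..<k} \<times> {..<k}" unbalanced]
    by (intro add_mono order.refl) auto
  also have "\<dots> \<le> (\<Sum>j<k. exp (- real D / 8))
      + (\<Sum>ij\<in>{..<k} \<times> {..<k}. 2 * exp (- t\<^sup>2 / (2 * real D))) + exp (- 2 * real D / real r ^ 2)"
  proof (intro add_mono sum_mono)
    show "?P (small j) \<le> exp (- real D / 8)" if "j \<in> {..<k}" for j
      unfolding small_def using that D by (intro prob_small_topic) auto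
    show "?P (unbalanced ij) \<le> 2 * exp (- t\<^sup>2 / (2 * real D))" if "ij \<in> {..<k} \<times> {..<k}" for ij
      using that D t prob_unbalanced_pair[of _ k _ D t] by (auto simp: unbalanced_def)
    show "?P sparse \<le> exp (- 2 * real D / real r ^ 2)"
      unfolding sparse_def using r D by (rule prob_many_sparse_words)
  qed
  finally show ?thesis by (simp add: power2_eq_square)
qed

lemma card_eq_sum_indicator:
  fixes D :: nat
  shows "real (card {l. l < D \<and> P l}) = (\<Sum>l<D. if P l then 1 else 0 :: real)"
  by (simp add: sum.If_cases Int_def)

lemma lambda_le_1_and_recovery_fails_if_typical:
  assumes r: "3 \<le> r" "r \<le> k" and D: "D > 0" and \<delta>: "4 * t / real D \<le> \<delta>" "0 \<le> \<delta>"
    and short: "(1 + 140 / real r ^ 2) ^ m < 5/4"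
    and typical: "typical_incidence k D r t \<omega>"
  defines "S \<equiv> topic_sets k D \<omega>"
  shows "lambda_delta k D \<delta> (topic_matrix S) \<le> 1 \<and> support_recovery_fails k D r m (topic_matrix S)"
proof
  have S: "S i = {l. l < D \<and> \<omega> l i}" if "i < k" for i
    using that by (simp add: S_def topic_sets_def)
  then have Ssub: "S i \<subseteq> {..<D}" if "i < k" for i using that by auto
  have card_S: "real (card (S j)) = (\<Sum>l<D. if \<omega> l j then 1 else 0)" if "j < k" for j
    using S[OF that] card_eq_sum_indicator by simp
  have large: "real D \<le> 4 * real (card (S j))" if "j < k" for j
    using typical that unfolding typical_incidence_def card_S[OF that] by auto
  have "\<bar>2 * real (card (S i \<inter> S j)) - real (card (S j))\<bar> \<le> t"
    if ij: "i < k" "j < k" "i \<noteq> j" for i j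
  proof -
    have "S i \<inter> S j = {l. l < D \<and> \<omega> l i \<and> \<omega> l j}" using S ij by auto
    then have "2 * real (card (S i \<inter> S j)) - real (card (S j))
        = (\<Sum>l<D. 2 * (if \<omega> l i \<and> \<omega> l j then 1 else 0) - (if \<omega> l j then 1 else 0))"
      using card_S[OF ij(2)] by (simp add: card_eq_sum_indicator sum_subtractf sum_distrib_left)
    also have "\<dots> = (\<Sum>l<D. if \<omega> l j then (if \<omega> l i then 1 else -1) else 0)"
      by (intro sum.cong) auto
    finally show ?thesis using typical ij unfolding typical_incidence_def by force
  qed
  then show "lambda_delta k D \<delta> (topic_matrix S) \<le> 1"
    using r D \<delta> Ssub large by (intro lambda_delta_topic_matrix_le_1) auto
  have "S i \<noteq> {}" if "i < r" for i
    using large[of i] that r D by auto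
  moreover have "{l. l < D \<and> real (card {i. i < r - 1 \<and> l \<in> S i}) \<le> (real r - 1) / 4}
      = {l. l < D \<and> real (card {i. i < r - 1 \<and> \<omega> l i}) \<le> (real r - 1) / 4}"
    using S r by (intro Collect_cong conj_cong refl arg_cong[where f="\<lambda>X. real (card X) \<le> _"]) auto
  ultimately show "support_recovery_fails k D r m (topic_matrix S)"
    using typical r D Ssub large short
    by (intro support_recovery_fails_topic_matrix) (auto simp: typical_incidence_def card_eq_sum_indicator)
qed

lemma four_sqrt_div_le:
  fixes D L :: real
  assumes D: "D > 0" and L: "L \<ge> 0"
  shows "4 * sqrt (6 * D * L) / D \<le> 10 * sqrt (L / D)"
proof -
  define x where "x = L / D"
  have x: "x \<ge> 0" using D L by (simp add: x_def)
  have "6 * D * L = D\<^sup>2 * (6 * x)" using D by (simp add: x_def power2_eq_square)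
  then have "sqrt (6 * D * L) = sqrt (D\<^sup>2) * sqrt (6 * x)" by (simp only: real_sqrt_mult)
  then have "4 * sqrt (6 * D * L) / D = 4 * sqrt (6 * x)" using D by simp
  moreover have "(4 * sqrt (6 * x))\<^sup>2 \<le> (10 * sqrt x)\<^sup>2" using x by (simp add: power_mult_distrib)
  then have "4 * sqrt (6 * x) \<le> 10 * sqrt x" by (rule power2_le_imp_le) (use x in simp)
  ultimately show ?thesis by (simp add: x_def)
qed

text \<open>The pair-balance threshold \<open>t = \<surd>(6 D ln k)\<close> is chosen so that the union bound
  over the \<open>k\<^sup>2\<close> pairs of topics costs only \<open>2 / k\<close>.\<close>
lemma prob_lambda_le_1_and_recovery_fails_ge:
  assumes r: "226 \<le> r" "r \<le> k" and D: "D > 0"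
    and short: "(1 + 140 / real r ^ 2) ^ m < 5/4"
  shows "1 - (real k * exp (- real D / 8) + 2 / real k + exp (- 2 * real D / real r ^ 2))
    \<le> subsets_prob k D (\<lambda>S. lambda_delta k D (10 * sqrt (ln (real k) / real D)) (topic_matrix S) \<le> 1
          \<and> support_recovery_fails k D r m (topic_matrix S))"
    (is "_ \<le> subsets_prob k D ?hard")
proof -
  define t where "t = sqrt (6 * real D * ln (real k))"
  have k: "real k \<ge> 226" using r by simp
  then have "ln (real k) \<ge> 0" by simp
  then have t0: "t \<ge> 0" by (simp add: t_def)
  have "t\<^sup>2 = 6 * real D * ln (real k)" using D \<open>ln (real k) \<ge> 0\<close> by (simp add: t_def)
  then have "- t\<^sup>2 / (2 * real D) = real 3 * (- ln (real k))"
    using D by simp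
  then have "exp (- t\<^sup>2 / (2 * real D)) = exp (- ln (real k)) ^ 3"
    by (simp only: exp_of_nat_mult)
  also have "exp (- ln (real k)) = 1 / real k"
    using k by (simp add: exp_minus inverse_eq_divide)
  finally have pairs: "real k ^ 2 * (2 * exp (- t\<^sup>2 / (2 * real D))) = 2 / real k"
    using k by (simp add: power2_eq_square power3_eq_cube)
  have "{\<omega>. typical_incidence k D r t \<omega>}
      = space (incidence_pmf k D) - {\<omega>. \<not> typical_incidence k D r t \<omega>}"
    by auto
  then have "measure_pmf.prob (incidence_pmf k D) {\<omega>. typical_incidence k D r t \<omega>}
      = 1 - measure_pmf.prob (incidence_pmf k D) {\<omega>. \<not> typical_incidence k D r t \<omega>}"
    by (simp only: measure_pmf.prob_compl sets_measure_pmf UNIV_I)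
  then have "1 - (real k * exp (- real D / 8) + 2 / real k + exp (- 2 * real D / real r ^ 2))
      \<le> measure_pmf.prob (incidence_pmf k D) {\<omega>. typical_incidence k D r t \<omega>}"
    using prob_not_typical_incidence[OF r D t0] unfolding pairs by linarith
  also have "\<dots> \<le> measure_pmf.prob (incidence_pmf k D) {\<omega>. ?hard (topic_sets k D \<omega>)}"
  proof (intro measure_pmf.finite_measure_mono subsetI CollectI)
    fix \<omega> assume "\<omega> \<in> {\<omega>. typical_incidence k D r t \<omega>}"
    moreover have "4 * t / real D \<le> 10 * sqrt (ln (real k) / real D)"
      unfolding t_def using D \<open>ln (real k) \<ge> 0\<close> by (intro four_sqrt_div_le) auto
    moreover have "0 \<le> 10 * sqrt (ln (real k) / real D)"
      using \<open>ln (real k) \<ge> 0\<close> by simp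
    ultimately show "?hard (topic_sets k D \<omega>)"
      using r D short by (intro lambda_le_1_and_recovery_fails_if_typical) auto
  qed simp
  finally show ?thesis by (simp add: subsets_prob_eq_incidence)
qed

section \<open>Asymptotics\<close>

lemma tendsto_exp_neg_at_top:
  fixes f :: "'a \<Rightarrow> real"
  assumes "filterlim f at_top F" "c > 0"
  shows "((\<lambda>x. exp (- (c * f x))) \<longlongrightarrow> 0) F"
proof -
  have "filterlim (\<lambda>x. c * f x) at_top F"
    using filterlim_tendsto_pos_mult_at_top[OF tendsto_const] assms by blast
  then show ?thesis
    by (rule filterlim_compose[OF exp_at_bot filterlim_compose[OF filterlim_uminus_at_bot_at_top]])
qed

lemma tendsto_mult_exp_neg_0:
  fixes k D :: "nat \<Rightarrow> real"
  assumes D: "filterlim D at_top sequentially" and kD: "((\<lambda>n. ln (k n) / D n) \<longlongrightarrow> 0) sequentially"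
    and k: "eventually (\<lambda>n. k n > 0) sequentially"
  shows "((\<lambda>n. k n * exp (- D n / 8)) \<longlongrightarrow> 0) sequentially"
proof -
  have "((\<lambda>n. ln (k n) / D n - 1/8) \<longlongrightarrow> 0 - 1/8) sequentially"
    using kD by (intro tendsto_diff tendsto_const)
  then have "filterlim (\<lambda>n. (ln (k n) / D n - 1/8) * D n) at_bot sequentially"
    using D by (intro filterlim_tendsto_neg_mult_at_bot) auto
  then have "((\<lambda>n. exp ((ln (k n) / D n - 1/8) * D n)) \<longlongrightarrow> 0) sequentially"
    by (rule filterlim_compose[OF exp_at_bot])
  moreover have "eventually (\<lambda>n. exp ((ln (k n) / D n - 1/8) * D n) = k n * exp (- D n / 8)) sequentially"
    using k D[unfolded filterlim_at_top_dense, rule_format, of 0]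
  proof eventually_elim
    case (elim n)
    then have "(ln (k n) / D n - 1/8) * D n = ln (k n) + (- D n / 8)"
      by (simp add: field_simps)
    then show ?case using elim by (simp only: exp_add exp_ln)
  qed
  ultimately show ?thesis by (rule Lim_transform_eventually)
qed

lemma eventually_short_document:
  assumes "((\<lambda>n. real (m n) / real (r n) ^ 2) \<longlongrightarrow> 0) sequentially"
  shows "eventually (\<lambda>n. (1 + 140 / real (r n) ^ 2) ^ m n < 5/4) sequentially"
proof -
  have "((\<lambda>n. exp (140 * (real (m n) / real (r n) ^ 2))) \<longlongrightarrow> exp (140 * 0)) sequentially"
    using assms by (intro tendsto_intros)
  then have "eventually (\<lambda>n. exp (140 * (real (m n) / real (r n) ^ 2)) < 5/4) sequentially"
    by (intro order_tendstoD(2)) auto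
  then show ?thesis
  proof (rule eventually_mono)
    fix n
    have "(1 + 140 / real (r n) ^ 2) ^ m n \<le> exp (140 / real (r n) ^ 2) ^ m n"
      by (intro power_mono exp_ge_add_one_self) simp
    also have "\<dots> = exp (140 * (real (m n) / real (r n) ^ 2))"
      by (simp flip: exp_of_nat_mult)
    finally show "exp (140 * (real (m n) / real (r n) ^ 2)) < 5/4 \<Longrightarrow> (1 + 140 / real (r n) ^ 2) ^ m n < 5/4"
      by simp
  qed
qed

lemma prob_lambda_le_1_and_recovery_fails_tendsto_1:
  fixes r k D m :: "nat \<Rightarrow> nat"
  assumes rk: "\<And>n. r n \<le> k n" and r: "filterlim (\<lambda>n. real (r n)) at_top sequentially"
    and Dr: "filterlim (\<lambda>n. real (D n) / real (r n) ^ 2) at_top sequentially"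
    and kD: "((\<lambda>n. ln (real (k n)) / real (D n)) \<longlongrightarrow> 0) sequentially"
    and mr: "((\<lambda>n. real (m n) / real (r n) ^ 2) \<longlongrightarrow> 0) sequentially"
  shows "((\<lambda>n. subsets_prob (k n) (D n) (\<lambda>S.
           lambda_delta (k n) (D n) (10 * sqrt (ln (real (k n)) / real (D n))) (topic_matrix S) \<le> 1
           \<and> support_recovery_fails (k n) (D n) (r n) (m n) (topic_matrix S))) \<longlongrightarrow> 1) sequentially"
    (is "(?P \<longlongrightarrow> 1) sequentially")
proof -
  have ev_r: "eventually (\<lambda>n. c \<le> real (r n)) sequentially" for c
    using r by (simp add: filterlim_at_top)
  have k: "filterlim (\<lambda>n. real (k n)) at_top sequentially"
    using r by (rule filterlim_at_top_mono) (simp add: rk)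
  have "eventually (\<lambda>n. real (D n) / real (r n) ^ 2 \<le> real (D n)) sequentially"
    using ev_r[of 1]
  proof (rule eventually_mono)
    fix n assume "1 \<le> real (r n)"
    then have "1 \<le> real (r n) ^ 2" by (rule one_le_power)
    then show "real (D n) / real (r n) ^ 2 \<le> real (D n)"
      by (simp add: divide_le_eq mult_le_cancel_left1)
  qed
  with Dr have D: "filterlim (\<lambda>n. real (D n)) at_top sequentially"
    by (rule filterlim_at_top_mono)
  have lower: "eventually (\<lambda>n. 1 - (real (k n) * exp (- real (D n) / 8) + 2 / real (k n)
      + exp (- 2 * real (D n) / real (r n) ^ 2)) \<le> ?P n) sequentially"
    using ev_r[of 226] D[unfolded filterlim_at_top_dense, rule_format, of 0]
      eventually_short_document[OF mr]
    by eventually_elim (rule prob_lambda_le_1_and_recovery_fails_ge, use rk in auto)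
  have upper: "?P n \<le> 1" for n
    by (simp add: subsets_prob_eq_incidence)
  have "((\<lambda>n. real (k n) * exp (- real (D n) / 8)) \<longlongrightarrow> 0) sequentially"
    using D kD k[unfolded filterlim_at_top_dense, rule_format, of 0] by (rule tendsto_mult_exp_neg_0)
  moreover have "((\<lambda>n. 2 / real (k n)) \<longlongrightarrow> 0) sequentially"
    by (rule tendsto_divide_0[OF tendsto_const filterlim_at_top_imp_at_infinity[OF k]])
  moreover have "((\<lambda>n. exp (- 2 * real (D n) / real (r n) ^ 2)) \<longlongrightarrow> 0) sequentially"
    using tendsto_exp_neg_at_top[OF Dr, of 2] by simp
  ultimately have "((\<lambda>n. 1 - (real (k n) * exp (- real (D n) / 8) + 2 / real (k n)
      + exp (- 2 * real (D n) / real (r n) ^ 2))) \<longlongrightarrow> 1 - (0 + 0 + 0)) sequentially"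
    by (intro tendsto_diff tendsto_add tendsto_const)
  then show ?thesis
    by (intro tendsto_sandwich[OF lower _ _ tendsto_const]) (simp_all add: upper)
qed

theorem theorem6p1:
  shows "\<exists>c::real. c > 0 \<and>
    (\<forall>(r::nat \<Rightarrow> nat) (k::nat \<Rightarrow> nat) (D::nat \<Rightarrow> nat) (m::nat \<Rightarrow> nat).
      (\<forall>n. r n \<le> k n) \<and>
      filterlim (\<lambda>n. real (r n)) at_top sequentially \<and>
      filterlim (\<lambda>n. real (D n) / real (r n) ^ 2) at_top sequentially \<and>
      ((\<lambda>n. ln (real (k n)) / real (D n)) \<longlongrightarrow> 0) sequentially \<and>
      ((\<lambda>n. real (m n) / real (r n) ^ 2) \<longlongrightarrow> 0) sequentially
      \<longrightarrow>
      ((\<lambda>n. subsets_prob (k n) (D n) (\<lambda>S.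
          lambda_delta (k n) (D n) (c * sqrt (ln (real (k n)) / real (D n)))
              (topic_matrix S) \<le> 1
          \<and> (\<forall>alg :: nat list \<Rightarrow> nat set pmf.
               \<exists>x \<in> prob_simplex (k n).
                 card (supp (k n) x) \<le> r n \<and>
                 (\<forall>i \<in> supp (k n) x. x i \<ge> 1 / real (r n)) \<and>
                 output_prob (k n) (D n) (m n) (topic_matrix S) alg x (supp (k n) x) < 3/4)))
       \<longlongrightarrow> 1) sequentially)"
proof (intro exI[of _ 10] conjI allI impI)
  fix r k D m :: "nat \<Rightarrow> nat"
  assume "(\<forall>n. r n \<le> k n) \<and>
      filterlim (\<lambda>n. real (r n)) at_top sequentially \<and>
      filterlim (\<lambda>n. real (D n) / real (r n) ^ 2) at_top sequentially \<and>
      ((\<lambda>n. ln (real (k n)) / real (D n)) \<longlongrightarrow> 0) sequentially \<and>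
      ((\<lambda>n. real (m n) / real (r n) ^ 2) \<longlongrightarrow> 0) sequentially"
  then show "((\<lambda>n. subsets_prob (k n) (D n) (\<lambda>S.
          lambda_delta (k n) (D n) (10 * sqrt (ln (real (k n)) / real (D n)))
              (topic_matrix S) \<le> 1
          \<and> (\<forall>alg :: nat list \<Rightarrow> nat set pmf.
               \<exists>x \<in> prob_simplex (k n).
                 card (supp (k n) x) \<le> r n \<and>
                 (\<forall>i \<in> supp (k n) x. x i \<ge> 1 / real (r n)) \<and>
                 output_prob (k n) (D n) (m n) (topic_matrix S) alg x (supp (k n) x) < 3/4)))
       \<longlongrightarrow> 1) sequentially"
    by (elim conjE) (rule prob_lambda_le_1_and_recovery_fails_tendsto_1[of r k D m, unfolded support_recovery_fails_def]; blast)
qed simp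

end
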